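(* Let $a>0$, $b>0$, $\mu_1,\mu_2>0$, $\chi_1,\chi_2\ge0$ and $\lambda_1=\lambda_2=\lambda>0$. Let $c^*=c^*(\chi_1,\mu_1,\lambda,\chi_2,\mu_2,\lambda)$ be the quantity defined in the context. Then: (1) if $\chi_1\mu_1=\chi_2\mu_2$, then $c^*=2\sqrt a$ if $a\le\lambda$ and $c^*=\frac{a+\lambda}{\sqrt\lambda}$ if $a\ge\lambda$; (2) if $0<\chi_1\mu_1-\chi_2\mu_2<\frac b2$, then $\lim_{\chi_1\mu_1-\chi_2\mu_2\to0^+}c^*$ equals $2\sqrt a$ if $a\le\lambda$ and $\frac{a+\lambda}{\sqrt\lambda}$ if $a\ge\lambda$ (here $a,b,\lambda$ are fixed and $c^*$ depends on $\chi_1,\chi_2,\mu_1,\mu_2$ only through $\chi_1\mu_1-\chi_2\mu_2$); (3) if $\chi_1\mu_1<\chi_2\mu_2$, then $\lim_{\chi_2\mu_2-\chi_1\mu_1\to0^+}c^*$ equals $2\sqrt a$ if $a\le\lambda$ and $\frac{a+\lambda}{\sqrt\lambda}$ if $a\ge\lambda$.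
   Context: For general $\lambda_1,\lambda_2>0$ and $0<\mu<\min\{1,\sqrt{\lambda_1/a},\sqrt{\lambda_2/a}\}$ define $$\overline{L}_{\mu}=\min\Big\{\frac{\chi_1\mu_1\lambda_1(\lambda_1-\lambda_2)_+}{(\lambda_2-a\mu^2)(\lambda_1-a\mu^2)}+\frac{(\chi_2\mu_2\lambda_2-\chi_1\mu_1\lambda_1)_{+}}{\lambda_2-a\mu^2},\ \frac{\chi_2\mu_2\lambda_2(\lambda_1-\lambda_2)_+}{(\lambda_2-a\mu^2)(\lambda_1-a\mu^2)}+\frac{(\chi_2\mu_2\lambda_2-\chi_1\mu_1\lambda_1)_{+}}{\lambda_1-a\mu^2}\Big\},$$ $$K_{\mu}=\min\Big\{\tfrac{|\chi_2\mu_2-\chi_1\mu_1|(\sqrt{\lambda_2-a\mu^2}+\mu\sqrt a)}{\lambda_2-a\mu^2}+\Big|\tfrac{\chi_1\mu_1}{\sqrt{\lambda_1-a\mu^2}}-\tfrac{\chi_1\mu_1}{\sqrt{\lambda_2-a\mu^2}}\Big|+\tfrac{\mu\sqrt a\chi_1\mu_1|\lambda_1-\lambda_2|}{(\lambda_1-a\mu^2)(\lambda_2-a\mu^2)},\ \tfrac{|\chi_2\mu_2-\chi_1\mu_1|(\sqrt{\lambda_1-a\mu^2}+\mu\sqrt a)}{\lambda_1-a\mu^2}+\Big|\tfrac{\chi_2\mu_2}{\sqrt{\lambda_2-a\mu^2}}-\tfrac{\chi_2\mu_2}{\sqrt{\lambda_1-a\mu^2}}\Big|+\tfrac{\mu\sqrt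 a\chi_2\mu_2|\lambda_2-\lambda_1|}{(\lambda_2-a\mu^2)(\lambda_1-a\mu^2)}\Big\},$$ where $(r)_+=\max\{r,0\}$. Let $\mu^*=\sup\{\bar\mu\in(0,\min\{1,\sqrt{\lambda_1/a},\sqrt{\lambda_2/a}\}) : \mu\sqrt a K_\mu+\overline L_\mu\le b+\chi_2\mu_2-\chi_1\mu_1 \text{ for all } 0<\mu\le\bar\mu\}$ and $c^*(\chi_1,\mu_1,\lambda_1,\chi_2,\mu_2,\lambda_2)=\lim_{\mu\to\mu^{*-}}\sqrt a(\mu+\frac1\mu)$. *)

theory Defs
  imports Complex_Main
begin

definition pos_part :: "real \<Rightarrow> real" where
  "pos_part r = max r 0"

text \<open>The quantity bar L_mu. Arguments: a, chi1, mu1, lambda1, chi2, mu2, lambda2, mu.\<close>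
definition Lbar :: "real \<Rightarrow> real \<Rightarrow> real \<Rightarrow> real \<Rightarrow> real \<Rightarrow> real \<Rightarrow> real \<Rightarrow> real \<Rightarrow> real" where
  "Lbar a x1 m1 l1 x2 m2 l2 mu =
     min (x1 * m1 * l1 * pos_part (l1 - l2) / ((l2 - a * mu\<^sup>2) * (l1 - a * mu\<^sup>2))
            + pos_part (x2 * m2 * l2 - x1 * m1 * l1) / (l2 - a * mu\<^sup>2))
         (x2 * m2 * l2 * pos_part (l1 - l2) / ((l2 - a * mu\<^sup>2) * (l1 - a * mu\<^sup>2))
            + pos_part (x2 * m2 * l2 - x1 * m1 * l1) / (l1 - a * mu\<^sup>2))"

definition Kmu :: "real \<Rightarrow> real \<Rightarrow> real \<Rightarrow> real \<Rightarrow> real \<Rightarrow> real \<Rightarrow> real \<Rightarrow> real \<Rightarrow> real" where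
  "Kmu a x1 m1 l1 x2 m2 l2 mu =
     min (\<bar>x2 * m2 - x1 * m1\<bar> * (sqrt (l2 - a * mu\<^sup>2) + mu * sqrt a) / (l2 - a * mu\<^sup>2)
            + \<bar>x1 * m1 / sqrt (l1 - a * mu\<^sup>2) - x1 * m1 / sqrt (l2 - a * mu\<^sup>2)\<bar>
            + mu * sqrt a * x1 * m1 * \<bar>l1 - l2\<bar> / ((l1 - a * mu\<^sup>2) * (l2 - a * mu\<^sup>2)))
         (\<bar>x2 * m2 - x1 * m1\<bar> * (sqrt (l1 - a * mu\<^sup>2) + mu * sqrt a) / (l1 - a * mu\<^sup>2)
            + \<bar>x2 * m2 / sqrt (l2 - a * mu\<^sup>2) - x2 * m2 / sqrt (l1 - a * mu\<^sup>2)\<bar>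
            + mu * sqrt a * x2 * m2 * \<bar>l2 - l1\<bar> / ((l2 - a * mu\<^sup>2) * (l1 - a * mu\<^sup>2)))"

definition mustar :: "real \<Rightarrow> real \<Rightarrow> real \<Rightarrow> real \<Rightarrow> real \<Rightarrow> real \<Rightarrow> real \<Rightarrow> real \<Rightarrow> real" where
  "mustar a b x1 m1 l1 x2 m2 l2 =
     Sup {mb. 0 < mb \<and> mb < min 1 (min (sqrt (l1 / a)) (sqrt (l2 / a))) \<and>
              (\<forall>mu. 0 < mu \<and> mu \<le> mb \<longrightarrow>
                 mu * sqrt a * Kmu a x1 m1 l1 x2 m2 l2 mu + Lbar a x1 m1 l1 x2 m2 l2 mu
                   \<le> b + x2 * m2 - x1 * m1)}"

definition cstar :: "real \<Rightarrow> real \<Rightarrow> real \<Rightarrow> real \<Rightarrow> real \<Rightarrow> real \<Rightarrow> real \<Rightarrow> real \<Rightarrow> real" where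
  "cstar a b x1 m1 l1 x2 m2 l2 =
     Lim (at_left (mustar a b x1 m1 l1 x2 m2 l2)) (\<lambda>mu. sqrt a * (mu + 1 / mu))"

end

theory Submission imports Defs begin

text \<open>
  When \<open>\<lambda>\<^sub>1 = \<lambda>\<^sub>2 = \<lambda>\<close> the admissibility condition defining \<open>\<mu>\<^sup>*\<close> depends only on
  \<open>d = \<chi>\<^sub>2\<mu>\<^sub>2 - \<chi>\<^sub>1\<mu>\<^sub>1\<close>, and its left-hand side is bounded by \<open>3\<lambda>|d| / (\<lambda> - a\<mu>\<^sup>2)\<close>.
  So as \<open>d \<rightarrow> 0\<close> the condition holds on all of \<open>(0, M - \<epsilon>]\<close>, where
  \<open>M = min 1 (\<surd>(\<lambda>/a))\<close> is the upper end of the admissible range; hence \<open>\<mu>\<^sup>* \<rightarrow> M\<close> and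
  \<open>c\<^sup>* = \<surd>a (\<mu>\<^sup>* + 1/\<mu>\<^sup>*) \<rightarrow> \<surd>a (M + 1/M)\<close>. The case \<open>d = 0\<close> is the constant sequence.
\<close>

lemma Kmu_same_lambda:
  "Kmu a x1 m1 l x2 m2 l mu
     = \<bar>x2 * m2 - x1 * m1\<bar> * (sqrt (l - a * mu\<^sup>2) + mu * sqrt a) / (l - a * mu\<^sup>2)"
  unfolding Kmu_def by simp

lemma Lbar_same_lambda:
  "l > 0 \<Longrightarrow> Lbar a x1 m1 l x2 m2 l mu = l * pos_part (x2 * m2 - x1 * m1) / (l - a * mu\<^sup>2)"
  unfolding Lbar_def pos_part_def
  by (simp add: right_diff_distrib[symmetric] mult.commute max_mult_distrib_left)

lemma wave_condition_of_small_difference: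
  fixes a b l d mu del :: real
  assumes "a > 0" "l > 0" "mu > 0" "del > 0" "del \<le> l - a * mu\<^sup>2"
    and small: "\<bar>d\<bar> * (3 * l / del + 1) \<le> b"
  shows "mu * sqrt a * (\<bar>d\<bar> * (sqrt (l - a * mu\<^sup>2) + mu * sqrt a) / (l - a * mu\<^sup>2))
           + l * pos_part d / (l - a * mu\<^sup>2) \<le> b + d"
proof -
  define s where "s = l - a * mu\<^sup>2"
  have s: "del \<le> s" "s \<le> l" "s > 0"
    using assms unfolding s_def by auto
  have "mu * sqrt a = sqrt (a * mu\<^sup>2)"
    using assms by (simp add: real_sqrt_mult mult.commute)
  also have "\<dots> \<le> sqrt l"
    using s unfolding s_def by simp
  finally have mu_sqrt_a: "mu * sqrt a \<le> sqrt l" .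
  have "mu * sqrt a * (sqrt s + mu * sqrt a) \<le> sqrt l * (sqrt l + sqrt l)"
    using assms s mu_sqrt_a by (intro mult_mono add_mono) auto
  also have "\<dots> = 2 * l"
    using assms by simp
  finally have "mu * sqrt a * (sqrt s + mu * sqrt a) \<le> 2 * l" .
  then have "mu * sqrt a * (\<bar>d\<bar> * (sqrt s + mu * sqrt a) / s) \<le> \<bar>d\<bar> * (2 * l) / s"
    using s by (simp add: divide_right_mono mult_left_mono mult.left_commute)
  also have "\<dots> \<le> \<bar>d\<bar> * (2 * l) / del"
    using s assms by (simp add: frac_le)
  finally have K_part: "mu * sqrt a * (\<bar>d\<bar> * (sqrt s + mu * sqrt a) / s) \<le> \<bar>d\<bar> * (2 * l) / del" .
  have "0 \<le> pos_part d" "pos_part d \<le> \<bar>d\<bar>"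
    unfolding pos_part_def by auto
  then have L_part: "l * pos_part d / s \<le> l * \<bar>d\<bar> / del"
    using s assms by (simp add: frac_le mult_left_mono)
  have "\<bar>d\<bar> * (2 * l) / del + l * \<bar>d\<bar> / del = \<bar>d\<bar> * (3 * l / del)"
    by (simp add: field_simps)
  also have "\<dots> \<le> b + d"
    using small by (simp add: algebra_simps)
  finally show ?thesis
    using K_part L_part unfolding s_def by linarith
qed

lemma mult_square_less_of_less_sqrt:
  fixes a l mu :: real
  assumes "a > 0" "0 \<le> mu" "mu < sqrt (l / a)"
  shows "a * mu\<^sup>2 < l"
proof -
  have "0 < sqrt (l / a)"
    using assms by linarith
  then have "l / a > 0"
    by simp
  have "mu\<^sup>2 < (sqrt (l / a))\<^sup>2"
    using assms by (intro power_strict_mono) auto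
  then show ?thesis
    using assms \<open>l / a > 0\<close> by (simp add: field_simps)
qed

lemma mustar_bounds:
  fixes a b l e x1 m1 x2 m2 :: real
  defines "M \<equiv> min 1 (sqrt (l / a))"
  assumes a: "a > 0" and l: "l > 0" and e: "0 < e" "e < M"
    and small: "\<bar>x2 * m2 - x1 * m1\<bar> * (3 * l / (l - a * (M - e)\<^sup>2) + 1) \<le> b"
  shows "M - e \<le> mustar a b x1 m1 l x2 m2 l" and "mustar a b x1 m1 l x2 m2 l \<le> M"
proof -
  define S where "S = {mb. 0 < mb \<and> mb < M \<and>
      (\<forall>mu. 0 < mu \<and> mu \<le> mb \<longrightarrow>
         mu * sqrt a * Kmu a x1 m1 l x2 m2 l mu + Lbar a x1 m1 l x2 m2 l mu \<le> b + x2 * m2 - x1 * m1)}"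
  have mustar_eq: "mustar a b x1 m1 l x2 m2 l = Sup S"
    unfolding mustar_def S_def M_def by simp
  have del_pos: "l - a * (M - e)\<^sup>2 > 0"
    using mult_square_less_of_less_sqrt[OF a, of "M - e"] e unfolding M_def by simp
  have mem: "M - e \<in> S"
    unfolding S_def
  proof (intro CollectI conjI allI impI)
    show "0 < M - e" "M - e < M"
      using e by auto
    fix mu :: real
    assume mu: "0 < mu \<and> mu \<le> M - e"
    then have "mu\<^sup>2 \<le> (M - e)\<^sup>2"
      by (intro power_mono) auto
    then have "l - a * (M - e)\<^sup>2 \<le> l - a * mu\<^sup>2"
      using a by (simp add: mult_left_mono)
    then show "mu * sqrt a * Kmu a x1 m1 l x2 m2 l mu + Lbar a x1 m1 l x2 m2 l mu
                 \<le> b + x2 * m2 - x1 * m1"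
      using wave_condition_of_small_difference[OF a l _ del_pos _ small, of mu] mu
      by (simp add: Kmu_same_lambda Lbar_same_lambda[OF l] add_diff_eq)
  qed
  have "bdd_above S"
    unfolding S_def bdd_above_def by (intro exI[of _ M]) auto
  with mem show "M - e \<le> mustar a b x1 m1 l x2 m2 l"
    unfolding mustar_eq by (rule cSup_upper)
  show "mustar a b x1 m1 l x2 m2 l \<le> M"
    unfolding mustar_eq
  proof (rule cSup_least)
    show "S \<noteq> {}"
      using mem by blast
  qed (auto simp: S_def)
qed

lemma tendsto_mustar:
  fixes a b l :: real and x1 m1 x2 m2 :: "'f \<Rightarrow> real"
  assumes a: "a > 0" and b: "b > 0" and l: "l > 0"
    and d: "((\<lambda>t. x2 t * m2 t - x1 t * m1 t) \<longlongrightarrow> 0) F"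
  shows "((\<lambda>t. mustar a b (x1 t) (m1 t) l (x2 t) (m2 t) l) \<longlongrightarrow> min 1 (sqrt (l / a))) F"
proof -
  define M where "M = min 1 (sqrt (l / a))"
  have near: "\<forall>\<^sub>F t in F. M - e \<le> mustar a b (x1 t) (m1 t) l (x2 t) (m2 t) l
                         \<and> mustar a b (x1 t) (m1 t) l (x2 t) (m2 t) l \<le> M"
    if e: "0 < e" "e < M" for e
  proof -
    define q where "q = 3 * l / (l - a * (M - e)\<^sup>2) + 1"
    have "l - a * (M - e)\<^sup>2 > 0"
      using mult_square_less_of_less_sqrt[OF a, of "M - e"] e unfolding M_def by simp
    then have q: "q > 0"
      unfolding q_def using l by (simp add: add_pos_pos)
    have "\<forall>\<^sub>F t in F. \<bar>x2 t * m2 t - x1 t * m1 t\<bar> < b / q"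
      using d b q by (auto simp: tendsto_iff dist_real_def)
    then show ?thesis
    proof (rule eventually_mono)
      fix t
      assume "\<bar>x2 t * m2 t - x1 t * m1 t\<bar> < b / q"
      then have "\<bar>x2 t * m2 t - x1 t * m1 t\<bar> * q \<le> b"
        using q by (simp add: pos_less_divide_eq less_imp_le)
      then show "M - e \<le> mustar a b (x1 t) (m1 t) l (x2 t) (m2 t) l
                   \<and> mustar a b (x1 t) (m1 t) l (x2 t) (m2 t) l \<le> M"
        using e mustar_bounds[OF a l] unfolding q_def M_def by blast
    qed
  qed
  have M_pos: "M > 0"
    unfolding M_def using a l by simp
  show ?thesis
    unfolding M_def[symmetric]
  proof (rule order_tendstoI)
    fix y
    assume "y < M"
    define e where "e = min (M - y) M / 2"
    have e: "0 < e" "e < M" "y < M - e"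
      using \<open>y < M\<close> M_pos unfolding e_def by (auto simp: min_def field_simps)
    show "\<forall>\<^sub>F t in F. y < mustar a b (x1 t) (m1 t) l (x2 t) (m2 t) l"
      by (rule eventually_mono[OF near[OF e(1,2)]]) (use e(3) in linarith)
  next
    fix y
    assume "M < y"
    have "0 < M / 2" "M / 2 < M"
      using M_pos by auto
    show "\<forall>\<^sub>F t in F. mustar a b (x1 t) (m1 t) l (x2 t) (m2 t) l < y"
      by (rule eventually_mono[OF near[OF \<open>0 < M / 2\<close> \<open>M / 2 < M\<close>]]) (use \<open>M < y\<close> in linarith)
  qed
qed

lemma cstar_eq_of_mustar_pos:
  assumes "mustar a b x1 m1 l1 x2 m2 l2 > 0"
  shows "cstar a b x1 m1 l1 x2 m2 l2
           = sqrt a * (mustar a b x1 m1 l1 x2 m2 l2 + 1 / mustar a b x1 m1 l1 x2 m2 l2)"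
  unfolding cstar_def
  using assms by (intro tendsto_Lim trivial_limit_at_left_real tendsto_intros) auto

lemma tendsto_cstar:
  fixes a b l :: real and x1 m1 x2 m2 :: "'f \<Rightarrow> real"
  assumes a: "a > 0" and b: "b > 0" and l: "l > 0"
    and d: "((\<lambda>t. x2 t * m2 t - x1 t * m1 t) \<longlongrightarrow> 0) F"
  shows "((\<lambda>t. cstar a b (x1 t) (m1 t) l (x2 t) (m2 t) l)
            \<longlongrightarrow> sqrt a * (min 1 (sqrt (l / a)) + 1 / min 1 (sqrt (l / a)))) F"
proof -
  define M where "M = min 1 (sqrt (l / a))"
  define ms where "ms t = mustar a b (x1 t) (m1 t) l (x2 t) (m2 t) l" for t
  have M_pos: "M > 0"
    unfolding M_def using a l by simp
  have ms: "(ms \<longlongrightarrow> M) F"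
    unfolding ms_def M_def using tendsto_mustar[OF a b l d] .
  then have "\<forall>\<^sub>F t in F. ms t > 0"
    using M_pos by (rule order_tendstoD)
  then have cstar_ms: "\<forall>\<^sub>F t in F. sqrt a * (ms t + 1 / ms t) = cstar a b (x1 t) (m1 t) l (x2 t) (m2 t) l"
    by eventually_elim (simp add: ms_def cstar_eq_of_mustar_pos)
  have "((\<lambda>t. sqrt a * (ms t + 1 / ms t)) \<longlongrightarrow> sqrt a * (M + 1 / M)) F"
    using ms M_pos by (intro tendsto_intros) auto
  from this cstar_ms show ?thesis
    unfolding M_def by (rule Lim_transform_eventually)
qed

lemma critical_speed_le:
  "a > 0 \<Longrightarrow> a \<le> l \<Longrightarrow> sqrt a * (min 1 (sqrt (l / a)) + 1 / min 1 (sqrt (l / a))) = 2 * sqrt a"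
  by (simp add: min_def)

lemma critical_speed_ge:
  assumes "a > 0" "l > 0" "l \<le> a"
  shows "sqrt a * (min 1 (sqrt (l / a)) + 1 / min 1 (sqrt (l / a))) = (a + l) / sqrt l"
proof -
  have "min 1 (sqrt (l / a)) = sqrt l / sqrt a"
    using assms by (simp add: min_def real_sqrt_divide)
  moreover have "sqrt a * (sqrt l / sqrt a + 1 / (sqrt l / sqrt a)) = (a + l) / sqrt l"
    using assms by (simp add: field_simps)
  ultimately show ?thesis
    by simp
qed

theorem mainTheorem2:
  fixes a b l :: real
  assumes "a > 0" and "b > 0" and "l > 0"
  shows
   "(\<forall>x1 m1 x2 m2 :: real. m1 > 0 \<longrightarrow> m2 > 0 \<longrightarrow> x1 \<ge> 0 \<longrightarrow> x2 \<ge> 0 \<longrightarrow>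
        x1 * m1 = x2 * m2 \<longrightarrow>
        (a \<le> l \<longrightarrow> cstar a b x1 m1 l x2 m2 l = 2 * sqrt a) \<and>
        (a \<ge> l \<longrightarrow> cstar a b x1 m1 l x2 m2 l = (a + l) / sqrt l))
    \<and>
    (\<forall>(F :: 'f filter) (x1 :: 'f \<Rightarrow> real) m1 x2 m2.
        (\<forall>\<^sub>F t in F. m1 t > 0 \<and> m2 t > 0 \<and> x1 t \<ge> 0 \<and> x2 t \<ge> 0 \<and>
                      0 < x1 t * m1 t - x2 t * m2 t \<and> x1 t * m1 t - x2 t * m2 t < b / 2) \<longrightarrow>
        ((\<lambda>t. x1 t * m1 t - x2 t * m2 t) \<longlongrightarrow> 0) F \<longrightarrow>
        (a \<le> l \<longrightarrow> ((\<lambda>t. cstar a b (x1 t) (m1 t) l (x2 t) (m2 t) l) \<longlongrightarrow> 2 * sqrt a) F) \<and>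
        (a \<ge> l \<longrightarrow> ((\<lambda>t. cstar a b (x1 t) (m1 t) l (x2 t) (m2 t) l) \<longlongrightarrow> (a + l) / sqrt l) F))
    \<and>
    (\<forall>(F :: 'g filter) (x1 :: 'g \<Rightarrow> real) m1 x2 m2.
        (\<forall>\<^sub>F t in F. m1 t > 0 \<and> m2 t > 0 \<and> x1 t \<ge> 0 \<and> x2 t \<ge> 0 \<and>
                      x1 t * m1 t < x2 t * m2 t) \<longrightarrow>
        ((\<lambda>t. x2 t * m2 t - x1 t * m1 t) \<longlongrightarrow> 0) F \<longrightarrow>
        (a \<le> l \<longrightarrow> ((\<lambda>t. cstar a b (x1 t) (m1 t) l (x2 t) (m2 t) l) \<longlongrightarrow> 2 * sqrt a) F) \<and>
        (a \<ge> l \<longrightarrow> ((\<lambda>t. cstar a b (x1 t) (m1 t) l (x2 t) (m2 t) l) \<longlongrightarrow> (a + l) / sqrt l) F))"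
proof -
  let ?c = "sqrt a * (min 1 (sqrt (l / a)) + 1 / min 1 (sqrt (l / a)))"
  have speed: "a \<le> l \<Longrightarrow> ?c = 2 * sqrt a" "l \<le> a \<Longrightarrow> ?c = (a + l) / sqrt l"
    using critical_speed_le critical_speed_ge assms by simp_all
  show ?thesis
  proof (intro conjI allI impI)
    fix x1 m1 x2 m2 :: real
    assume "x1 * m1 = x2 * m2"
    then have "(\<lambda>n::nat. cstar a b x1 m1 l x2 m2 l) \<longlonglongrightarrow> ?c"
      using tendsto_cstar[OF assms, of "\<lambda>_. x2" "\<lambda>_. m2" "\<lambda>_. x1" "\<lambda>_. m1"] by simp
    then have "cstar a b x1 m1 l x2 m2 l = ?c"
      by (simp add: LIMSEQ_const_iff)
    then show "a \<le> l \<Longrightarrow> cstar a b x1 m1 l x2 m2 l = 2 * sqrt a"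
      and "l \<le> a \<Longrightarrow> cstar a b x1 m1 l x2 m2 l = (a + l) / sqrt l"
      using speed by simp_all
  next
    fix F :: "'f filter" and x1 m1 x2 m2 :: "'f \<Rightarrow> real"
    assume "((\<lambda>t. x1 t * m1 t - x2 t * m2 t) \<longlongrightarrow> 0) F"
    then have "((\<lambda>t. x2 t * m2 t - x1 t * m1 t) \<longlongrightarrow> 0) F"
      using tendsto_minus by fastforce
    then show "a \<le> l \<Longrightarrow> ((\<lambda>t. cstar a b (x1 t) (m1 t) l (x2 t) (m2 t) l) \<longlongrightarrow> 2 * sqrt a) F"
      and "l \<le> a \<Longrightarrow> ((\<lambda>t. cstar a b (x1 t) (m1 t) l (x2 t) (m2 t) l) \<longlongrightarrow> (a + l) / sqrt l) F"
      using tendsto_cstar[OF assms] speed by simp_all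
  next
    fix F :: "'g filter" and x1 m1 x2 m2 :: "'g \<Rightarrow> real"
    assume "((\<lambda>t. x2 t * m2 t - x1 t * m1 t) \<longlongrightarrow> 0) F"
    then show "a \<le> l \<Longrightarrow> ((\<lambda>t. cstar a b (x1 t) (m1 t) l (x2 t) (m2 t) l) \<longlongrightarrow> 2 * sqrt a) F"
      and "l \<le> a \<Longrightarrow> ((\<lambda>t. cstar a b (x1 t) (m1 t) l (x2 t) (m2 t) l) \<longlongrightarrow> (a + l) / sqrt l) F"
      using tendsto_cstar[OF assms] speed by simp_all
  qed
qed

end
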